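(* Let $k$ be a field, $A$ a $k$-algebra, $a_1,\ldots,a_m\in A$ and $d\ge1$. If $P_{\ge0}(a_1,\ldots,a_m)\subseteq P_{\le d-1}(a_1,\ldots,a_m)$, then every element of $ka_1+\cdots+ka_m$ is algebraic over $k$ of degree at most $M_{d,m}=\binom{d+m-1}{m}$.
   Context: Algebras are associative with unit. For nonnegative integers $i_1,\ldots,i_m$, $p_{i_1,\ldots,i_m}(x_1,\ldots,x_m)$ is the sum of all distinct noncommutative monomials with exactly $i_j$ occurrences of $x_j$ for each $j$ ($p_{0,\ldots,0}=1$); $p_{i_1,\ldots,i_m}(a_1,\ldots,a_m)$ is its evaluation at $x_j=a_j$. $P_n(a_1,\ldots,a_m)=\operatorname{span}_k\{p_{i_1,\ldots,i_m}(a_1,\ldots,a_m)\mid i_1+\cdots+i_m=n\}$, $P_{\le r}(a_1,\ldots,a_m)=\sum_{n=0}^rP_n(a_1,\ldots,a_m)$, $P_{\ge r}(a_1,\ldots,a_m)=\sum_{n=r}^\infty P_n(a_1,\ldots,a_m)$. Algebraic of degree at most $D$ means a root of a nonzero polynomial in $k[t]$ of degree at most $D$. *)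

theory Defs
  imports "HOL-Computational_Algebra.Polynomial"
begin

text \<open>A k-algebra (associative, unital) is modelled as a ring A (type class ring_1)
  together with a unital ring homomorphism phi from the field k into the centre of A;
  scalar multiplication is c . x = phi c * x.\<close>

definition k_algebra_hom :: "('k::field \<Rightarrow> 'a::ring_1) \<Rightarrow> bool" where
  "k_algebra_hom phi \<longleftrightarrow>
     phi 1 = 1 \<and>
     (\<forall>x y. phi (x + y) = phi x + phi y) \<and>
     (\<forall>x y. phi (x * y) = phi x * phi y) \<and>
     (\<forall>c y. phi c * y = y * phi c)"

definition kspan :: "('k::field \<Rightarrow> 'a::ring_1) \<Rightarrow> 'a set \<Rightarrow> 'a set" where
  "kspan phi S = {x. \<exists>F c. finite F \<and> F \<subseteq> S \<and> x = (\<Sum>y\<in>F. phi (c y) * y)}"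

text \<open>Noncommutative monomials in x_0,...,x_(m-1) are words (lists) over {..<m};
  p_i(a) is the sum over all words with exactly i j occurrences of letter j (j < m)
  of the evaluated products.\<close>
definition words :: "nat \<Rightarrow> (nat \<Rightarrow> nat) \<Rightarrow> nat list set" where
  "words m i = {w. set w \<subseteq> {..<m} \<and> (\<forall>j<m. count_list w j = i j)}"

definition pp :: "nat \<Rightarrow> (nat \<Rightarrow> nat) \<Rightarrow> (nat \<Rightarrow> 'a::ring_1) \<Rightarrow> 'a" where
  "pp m i a = (\<Sum>w\<in>words m i. prod_list (map a w))"

definition Pn :: "('k::field \<Rightarrow> 'a::ring_1) \<Rightarrow> nat \<Rightarrow> (nat \<Rightarrow> 'a) \<Rightarrow> nat \<Rightarrow> 'a set" where
  "Pn phi m a n = kspan phi {pp m i a | i. (\<Sum>j<m. i j) = n}"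

definition Ple :: "('k::field \<Rightarrow> 'a::ring_1) \<Rightarrow> nat \<Rightarrow> (nat \<Rightarrow> 'a) \<Rightarrow> nat \<Rightarrow> 'a set" where
  "Ple phi m a r = kspan phi (\<Union>n\<in>{..r}. Pn phi m a n)"

definition Pge :: "('k::field \<Rightarrow> 'a::ring_1) \<Rightarrow> nat \<Rightarrow> (nat \<Rightarrow> 'a) \<Rightarrow> nat \<Rightarrow> 'a set" where
  "Pge phi m a r = kspan phi (\<Union>n\<in>{r..}. Pn phi m a n)"

definition aeval :: "('k::field \<Rightarrow> 'a::ring_1) \<Rightarrow> 'k poly \<Rightarrow> 'a \<Rightarrow> 'a" where
  "aeval phi q x = (\<Sum>n\<le>degree q. phi (coeff q n) * x ^ n)"

definition algebraic_deg_le :: "('k::field \<Rightarrow> 'a::ring_1) \<Rightarrow> nat \<Rightarrow> 'a \<Rightarrow> bool" where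
  "algebraic_deg_le phi D x \<longleftrightarrow> (\<exists>q. q \<noteq> 0 \<and> degree q \<le> D \<and> aeval phi q x = 0)"

end

theory Submission
  imports Defs
begin

text \<open>Write x = \<Sum> c_j a_j. Expanding x^n gives a sum over all words of length n in the
  a_j; since the scalars are central, grouping the words by their letter counts gives
  x^n = \<Sum> c^i p_i(a) \<in> P_n. Hence every power of x lies in P_{\<ge>0} \<subseteq> P_{\<le>d-1}, which is spanned
  by the p_i(a) with |i| \<le> d - 1, at most M = (d+m-1 choose m) elements. So 1, x, \<dots>, x^M are
  linearly dependent, and a dependence is a nonzero polynomial of degree at most M that
  vanishes at x.\<close>

lemma power_sum_eq_sum_words:
  fixes y :: "nat \<Rightarrow> 'a::ring_1"
  shows "(\<Sum>j<m. y j) ^ n = (\<Sum>w | set w \<subseteq> {..<m} \<and> length w = n. prod_list (map y w))"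
proof (induction n)
  case 0
  have "{w. set w \<subseteq> {..<m} \<and> length w = 0} = {[]}" by auto
  then show ?case by simp
next
  case (Suc n)
  define W where "W n = {w. set w \<subseteq> {..<m} \<and> length w = n}" for n
  have cons_image: "W (Suc n) = (\<lambda>(j, w). j # w) ` ({..<m} \<times> W n)"
    unfolding W_def by (auto simp: length_Suc_conv)
  have inj: "inj_on (\<lambda>(j, w). j # w) ({..<m} \<times> W n)" by (auto simp: inj_on_def)
  have "(\<Sum>j<m. y j) ^ Suc n = (\<Sum>j<m. y j) * (\<Sum>w\<in>W n. prod_list (map y w))"
    using Suc by (simp add: W_def)
  also have "\<dots> = (\<Sum>j<m. \<Sum>w\<in>W n. y j * prod_list (map y w))"
    by (rule sum_product)
  also have "\<dots> = (\<Sum>p\<in>{..<m} \<times> W n. prod_list (map y ((\<lambda>(j, w). j # w) p)))"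
    by (simp add: sum.cartesian_product case_prod_beta)
  also have "\<dots> = (\<Sum>w\<in>W (Suc n). prod_list (map y w))"
    unfolding cons_image by (rule sum.reindex[OF inj, symmetric, unfolded comp_def])
  finally show ?case by (simp add: W_def)
qed

lemma sum_count_list_eq_length:
  "set (w :: nat list) \<subseteq> {..<m} \<Longrightarrow> (\<Sum>j<m. count_list w j) = length w"
proof (induction w)
  case (Cons x w)
  have "(\<Sum>j<m. count_list (x # w) j) = (\<Sum>j<m. (if x = j then 1 else 0) + count_list w j)"
    by (rule sum.cong) auto
  also have "\<dots> = 1 + (\<Sum>j<m. count_list w j)"
    using Cons.prems by (simp add: sum.distrib)
  finally show ?case using Cons by simp
qed simp

lemma prod_list_map_eq_prod_power_count_list:
  fixes c :: "nat \<Rightarrow> 'k::comm_monoid_mult"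
  shows "set w \<subseteq> {..<m} \<Longrightarrow> prod_list (map c w) = (\<Prod>j<m. c j ^ count_list w j)"
proof (induction w)
  case (Cons x w)
  have "(\<Prod>j<m. c j ^ count_list (x # w) j)
      = (\<Prod>j<m. (if x = j then c j else 1) * c j ^ count_list w j)"
    by (rule prod.cong) auto
  also have "\<dots> = c x * (\<Prod>j<m. c j ^ count_list w j)"
    using Cons.prems by (simp add: prod.distrib prod.delta)
  finally show ?case using Cons by simp
qed simp

lemma words_count_list:
  assumes "set v \<subseteq> {..<m}"
  shows "words m (count_list v) = {w. set w \<subseteq> {..<m} \<and> count_list w = count_list v}"
proof -
  have "count_list w = count_list v"
    if "set w \<subseteq> {..<m}" "\<forall>j<m. count_list w j = count_list v j" for w
  proof
    fix j
    show "count_list w j = count_list v j"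
    proof (cases "j < m")
      case False
      then have "j \<notin> set w" "j \<notin> set v" using that assms by auto
      then show ?thesis by (simp add: count_list_0_iff)
    qed (use that in auto)
  qed
  then show ?thesis unfolding words_def by auto
qed

lemma words_cong: "(\<And>j. j < m \<Longrightarrow> i j = i' j) \<Longrightarrow> words m i = words m i'"
  unfolding words_def by auto

lemma card_compositions:
  "card {l :: nat list. length l = m + 1 \<and> sum_list l = r} = (r + m) choose m"
proof -
  have "card {l :: nat list. length l = m + 1 \<and> sum_list l = r} = (r + m) choose r"
    using card_length_sum_list[of "m + 1" r] by simp
  also have "\<dots> = (r + m) choose m"
    using binomial_symmetric[of r "r + m"] by simp
  finally show ?thesis .
qed

lemma finite_compositions: "finite {l :: nat list. length l = m + 1 \<and> sum_list l = r}"
  by (rule card_ge_0_finite) (simp only: card_compositions zero_less_binomial le_add2)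

context vector_space
begin

lemma nontrivial_relation_in_span:
  assumes "finite B" "card B \<le> N" "\<And>k. k \<le> N \<Longrightarrow> f k \<in> span B"
  shows "\<exists>u. (\<exists>k\<le>N. u k \<noteq> 0) \<and> (\<Sum>k\<le>N. u k *s f k) = 0"
proof (cases "inj_on f {..N}")
  case True
  have "dependent (f ` {..N})"
  proof (rule ccontr)
    assume "independent (f ` {..N})"
    then have "card (f ` {..N}) \<le> card B"
      using independent_span_bound[OF assms(1)] assms(3) by auto
    then show False using True assms(2) by (simp add: card_image)
  qed
  then obtain u where "\<exists>v\<in>f ` {..N}. u v \<noteq> 0" "(\<Sum>v\<in>f ` {..N}. u v *s v) = 0"
    by (auto simp: dependent_finite)
  then show ?thesis
    by (intro exI[of _ "u \<circ> f"]) (auto simp: sum.reindex[OF True])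
next
  case False
  then obtain i j where ij: "i \<le> N" "j \<le> N" "i \<noteq> j" "f i = f j"
    by (auto simp: inj_on_def)
  let ?u = "\<lambda>k. if k = i then 1 else if k = j then -1 else 0"
  have "(\<Sum>k\<le>N. ?u k *s f k) = (\<Sum>k\<le>N. (if k = i then f i else 0) - (if k = j then f j else 0))"
    by (rule sum.cong) (use ij in auto)
  also have "\<dots> = 0" using ij by (simp add: sum_subtractf)
  finally show ?thesis using ij by (intro exI[of _ ?u]) auto
qed

end

locale k_algebra =
  fixes phi :: "'k::field \<Rightarrow> 'a::ring_1"
  assumes hom: "k_algebra_hom phi"
begin

lemma phi_1: "phi 1 = 1" and phi_add: "phi (x + y) = phi x + phi y"
  and phi_mult: "phi (x * y) = phi x * phi y" and phi_central: "phi c * z = z * phi c"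
  using hom unfolding k_algebra_hom_def by blast+

lemma phi_0: "phi 0 = 0"
  using phi_add[of 0 0] by simp

sublocale vs: vector_space "\<lambda>c x. phi c * x"
  by unfold_locales (simp_all add: distrib_left distrib_right phi_add phi_mult phi_1 mult.assoc)

lemma kspan_eq_span: "kspan phi S = vs.span S"
  unfolding kspan_def vs.span_explicit by blast

lemma kspan_image_lessThan:
  fixes a :: "nat \<Rightarrow> 'a"
  assumes "x \<in> kspan phi (a ` {..<m})"
  shows "\<exists>c. x = (\<Sum>j<m. phi (c j) * a j)"
proof -
  define lc where "lc c = (\<Sum>j<m. phi (c j) * a j)" for c
  have "vs.subspace (range lc)"
  proof (rule vs.subspaceI)
    have "lc (\<lambda>_. 0) = 0" by (simp add: lc_def phi_0)
    with rangeI[of lc "\<lambda>_. 0"] show "0 \<in> range lc" by simp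
  next
    fix x y assume "x \<in> range lc" "y \<in> range lc"
    then obtain c c' where "x = lc c" "y = lc c'" by auto
    then have "x + y = lc (\<lambda>j. c j + c' j)"
      by (simp add: lc_def phi_add distrib_right sum.distrib)
    then show "x + y \<in> range lc" by (simp only: rangeI)
  next
    fix r x assume "x \<in> range lc"
    then obtain c where "x = lc c" by auto
    have "phi r * lc c = lc (\<lambda>j. r * c j)"
      unfolding lc_def sum_distrib_left by (simp only: phi_mult mult.assoc)
    with \<open>x = lc c\<close> have "phi r * x = lc (\<lambda>j. r * c j)" by simp
    then show "phi r * x \<in> range lc" by (simp only: rangeI)
  qed
  moreover have "a j \<in> range lc" if "j < m" for j
  proof -
    have "lc (\<lambda>i. if i = j then 1 else 0) = (\<Sum>i<m. if i = j then a i else 0)"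
      unfolding lc_def by (rule sum.cong) (auto simp: phi_0 phi_1)
    then have "a j = lc (\<lambda>i. if i = j then 1 else 0)"
      using that by simp
    then show ?thesis by (simp only: rangeI)
  qed
  ultimately have "vs.span (a ` {..<m}) \<subseteq> range lc"
    by (intro vs.span_minimal) auto
  then show ?thesis using assms by (auto simp: kspan_eq_span lc_def)
qed

lemma prod_list_scaled:
  "prod_list (map (\<lambda>j. phi (c j) * a j) w) = phi (prod_list (map c w)) * prod_list (map a w)"
proof (induction w)
  case Nil then show ?case by (simp add: phi_1)
next
  case (Cons x w)
  have "phi (c x) * a x * (phi (prod_list (map c w)) * prod_list (map a w))
      = phi (c x) * (a x * phi (prod_list (map c w))) * prod_list (map a w)"
    by (simp add: mult.assoc)
  also have "\<dots> = phi (c x) * phi (prod_list (map c w)) * (a x * prod_list (map a w))"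
    by (metis mult.assoc phi_central)
  finally show ?case using Cons by (simp add: phi_mult)
qed

lemma power_sum_eq_sum_pp:
  fixes m n :: nat
  defines "W \<equiv> {w :: nat list. set w \<subseteq> {..<m} \<and> length w = n}"
  shows "(\<Sum>j<m. phi (c j) * a j) ^ n
    = (\<Sum>i\<in>count_list ` W. phi (\<Prod>j<m. c j ^ i j) * pp m i a)"
proof -
  let ?g = "\<lambda>i. phi (\<Prod>j<m. c j ^ i j)"
  have fin: "finite W" unfolding W_def by (rule finite_lists_length_eq) simp
  have fiber: "{w \<in> W. count_list w = count_list v} = words m (count_list v)" if "v \<in> W" for v
    using that sum_count_list_eq_length[of _ m] unfolding W_def
    by (auto simp: words_count_list) metis
  have "(\<Sum>j<m. phi (c j) * a j) ^ n = (\<Sum>w\<in>W. ?g (count_list w) * prod_list (map a w))"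
    unfolding W_def power_sum_eq_sum_words
    by (rule sum.cong) (auto simp: prod_list_scaled prod_list_map_eq_prod_power_count_list)
  also have "\<dots> = (\<Sum>i\<in>count_list ` W. \<Sum>w | w \<in> W \<and> count_list w = i. ?g i * prod_list (map a w))"
    by (subst sum.image_gen[OF fin]) (auto intro!: sum.cong)
  also have "\<dots> = (\<Sum>i\<in>count_list ` W. ?g i * pp m i a)"
    by (rule sum.cong) (auto simp: fiber pp_def sum_distrib_left)
  finally show ?thesis .
qed

lemma power_in_Pn: "(\<Sum>j<m. phi (c j) * a j) ^ n \<in> Pn phi m a n"
  unfolding power_sum_eq_sum_pp Pn_def kspan_eq_span
proof (intro vs.span_sum vs.span_scale vs.span_base)
  fix i assume "i \<in> count_list ` {w. set w \<subseteq> {..<m} \<and> length w = n}"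
  then have "(\<Sum>j<m. i j) = n" using sum_count_list_eq_length by auto
  then show "pp m i a \<in> {pp m i a |i. (\<Sum>j<m. i j) = n}" by blast
qed

lemma Pn_subset_Pge: "r \<le> n \<Longrightarrow> Pn phi m a n \<subseteq> Pge phi m a r"
  unfolding Pge_def kspan_eq_span by (intro subset_trans[OF _ vs.span_superset]) auto

text \<open>A monomial vector \<open>i\<close> with \<open>|i| = n \<le> r\<close> is recorded by the list of its \<open>m\<close> entries
  followed by the slack \<open>r - n\<close>.\<close>

lemma Ple_subset_span_compositions:
  "Ple phi m a r \<subseteq> vs.span ((\<lambda>l. pp m (\<lambda>j. if j < m then l ! j else 0) a)
      ` {l. length l = m + 1 \<and> sum_list l = r})"
  (is "_ \<subseteq> vs.span ?B")
proof -
  have "pp m i a \<in> ?B" if "(\<Sum>j<m. i j) \<le> r" for i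
  proof -
    define l where "l = map i [0..<m] @ [r - (\<Sum>j<m. i j)]"
    have "sum_list (map i [0..<m]) = (\<Sum>j<m. i j)"
      by (simp add: sum_list_map_eq_sum_count2 sum_set_upt_conv_sum_list_nat[symmetric] lessThan_atLeast0)
    then have "length l = m + 1 \<and> sum_list l = r"
      using that by (simp add: l_def)
    moreover have "pp m i a = pp m (\<lambda>j. if j < m then l ! j else 0) a"
      unfolding pp_def by (subst words_cong[of m i]) (auto simp: l_def nth_append)
    ultimately show ?thesis by blast
  qed
  then have "(\<Union>n\<in>{..r}. Pn phi m a n) \<subseteq> vs.span ?B"
    unfolding Pn_def kspan_eq_span by (intro UN_least vs.span_minimal) (auto intro: vs.span_base)
  then show ?thesis
    unfolding Ple_def kspan_eq_span by (rule vs.span_minimal) simp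
qed

lemma algebraic_deg_leI:
  assumes "\<exists>k\<le>N. u k \<noteq> 0" "(\<Sum>k\<le>N. phi (u k) * x ^ k) = 0"
  shows "algebraic_deg_le phi N x"
proof -
  define q where "q = (\<Sum>k\<le>N. monom (u k) k)"
  have coeff_q: "coeff q n = (if n \<le> N then u n else 0)" for n
    by (simp add: q_def coeff_sum sum.delta)
  have "q \<noteq> 0" using assms(1) coeff_q by (metis coeff_0)
  moreover have deg: "degree q \<le> N" by (rule degree_le) (simp add: coeff_q)
  moreover have "aeval phi q x = (\<Sum>n\<le>N. phi (coeff q n) * x ^ n)"
    unfolding aeval_def by (rule sum.mono_neutral_left) (auto simp: deg coeff_eq_0 phi_0)
  ultimately show ?thesis
    using assms(2) by (auto simp: algebraic_deg_le_def coeff_q)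
qed

end

theorem corollary3p6:
  fixes phi :: "'k::field \<Rightarrow> 'a::ring_1"
    and a :: "nat \<Rightarrow> 'a" and m d :: nat
  assumes "k_algebra_hom phi"
    and "d \<ge> 1"
    and "Pge phi m a 0 \<subseteq> Ple phi m a (d - 1)"
  shows "\<forall>x \<in> kspan phi (a ` {..<m}). algebraic_deg_le phi ((d + m - 1) choose m) x"
proof
  interpret k_algebra phi by unfold_locales (rule assms(1))
  let ?L = "{l. length l = m + 1 \<and> sum_list l = d - 1}"
  define B where "B = (\<lambda>l. pp m (\<lambda>j. if j < m then l ! j else 0) a) ` ?L"
  fix x assume "x \<in> kspan phi (a ` {..<m})"
  then obtain c where x: "x = (\<Sum>j<m. phi (c j) * a j)" using kspan_image_lessThan by blast
  have "card B \<le> card ?L"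
    unfolding B_def by (rule card_image_le[OF finite_compositions])
  also have "\<dots> = (d + m - 1) choose m"
    using card_compositions[of m "d - 1"] assms(2) by simp
  finally have "card B \<le> (d + m - 1) choose m" .
  moreover have "x ^ k \<in> vs.span B" for k
    using power_in_Pn[of c a m k] Pn_subset_Pge[of 0 k] assms(3) Ple_subset_span_compositions
    unfolding x B_def by blast
  moreover have "finite B"
    unfolding B_def by (rule finite_imageI[OF finite_compositions])
  ultimately obtain u where "\<exists>k \<le> (d + m - 1) choose m. u k \<noteq> 0"
    "(\<Sum>k \<le> (d + m - 1) choose m. phi (u k) * x ^ k) = 0"
    using vs.nontrivial_relation_in_span[of B _ "\<lambda>k. x ^ k"] by blast
  then show "algebraic_deg_le phi ((d + m - 1) choose m) x"
    by (rule algebraic_deg_leI)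
qed

end
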